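(* Let $U=\sum_{k=0}^rB_kE_2^k$ be a quasiautomorphic form of weight $w$ and depth $r$ for $\mathfrak{t}_\mu$. Then for every $0\le n\le r$ and all $z\in\mathbb{H}$, $$\frac{1}{z^{w-r}}\sum_{\ell=0}^{n}\binom{n}{\ell}g_\ell(Sz)\,(Sz)^{n-\ell}=(-1)^n\sum_{m=0}^{r-n}\binom{r-n}{m}g_m(z)\,z^{r-n-m},$$ where $Sz=-1/z$; equivalently $f_n(Sz)/z^{w-r}=(-1)^nf_{r-n}(z)$.
   Context: Let $\mu\ge 3$, $\varpi_\mu=2\cos(\pi/\mu)$, $T=\begin{pmatrix}1&\varpi_\mu\\0&1\end{pmatrix}$, $S=\begin{pmatrix}0&-1\\1&0\end{pmatrix}$, $\mathfrak{t}_\mu\subset\mathrm{SL}_2(\mathbb{R})$ generated by $T,S$. $\mathcal{A}_v(\mathfrak{t}_\mu)$ ($v$ even) is the space of holomorphic $f$ on $\mathbb{H}$ with $f(\gamma z)=(cz+d)^vf(z)$ for $\gamma\in\mathfrak{t}_\mu$, holomorphic at $i\infty$. $E_2$ is holomorphic on $\mathbb{H}$ with $E_2(Tz)=E_2(z)$, $E_2(Sz)/z^2=E_2(z)+C/z$, $C=\mathrm{lcm}(2,\mu)/(\pi i)$. A quasiautomorphic form of even weight $w$, depth $0\le r\le w/2$ is $U=\sum_{k=0}^rB_kE_2^k$ with $B_k\in\mathcal{A}_{w-2k}(\mathfrak{t}_\mu)$. With $\{r,\ell\}_m=\frac{(r-\ell)!(m+\ell)!}{r!\,m!}$, $g_\ell=C^\ell\sum_{m=0}^{r-\ell}\{r,\ell\}_mB_{\ell+m}E_2^m$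 for $0\le\ell\le r$, and $f_n(z)=\sum_{k=0}^n\binom{n}{k}g_k(z)z^{n-k}$ for $0\le n\le r$. *)

theory Defs
  imports "HOL-Complex_Analysis.Complex_Analysis"
begin

definition upper_half :: "complex set" where
  "upper_half = {z. Im z > 0}"

definition varpi :: "nat \<Rightarrow> real" where
  "varpi mu = 2 * cos (pi / real mu)"

text \<open>2x2 real matrices (a,b,c,d) = ((a,b),(c,d)).\<close>
type_synonym mat2 = "real \<times> real \<times> real \<times> real"

fun mmult :: "mat2 \<Rightarrow> mat2 \<Rightarrow> mat2" where
  "mmult (a, b, c, d) (a', b', c', d') =
     (a*a' + b*c', a*b' + b*d', c*a' + d*c', c*b' + d*d')"

definition T_mat :: "nat \<Rightarrow> mat2" where
  "T_mat mu = (1, varpi mu, 0, 1)"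

definition S_mat :: mat2 where
  "S_mat = (0, -1, 1, 0)"

inductive_set hecke_group :: "nat \<Rightarrow> mat2 set" for mu :: nat where
  one: "(1, 0, 0, 1) \<in> hecke_group mu"
| T: "g \<in> hecke_group mu \<Longrightarrow> mmult (T_mat mu) g \<in> hecke_group mu"
| Tinv: "g \<in> hecke_group mu \<Longrightarrow> mmult (1, - varpi mu, 0, 1) g \<in> hecke_group mu"
| S: "g \<in> hecke_group mu \<Longrightarrow> mmult S_mat g \<in> hecke_group mu"
| Sinv: "g \<in> hecke_group mu \<Longrightarrow> mmult (0, 1, -1, 0) g \<in> hecke_group mu"

fun moebius :: "mat2 \<Rightarrow> complex \<Rightarrow> complex" where
  "moebius (a, b, c, d) z = (of_real a * z + of_real b) / (of_real c * z + of_real d)"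

fun jfactor :: "mat2 \<Rightarrow> complex \<Rightarrow> complex" where
  "jfactor (a, b, c, d) z = of_real c * z + of_real d"

text \<open>Holomorphy at i\<infinity> (for a function holomorphic on H and invariant under T):
  boundedness as Im z \<rightarrow> \<infinity>.\<close>
definition holo_at_infinity :: "(complex \<Rightarrow> complex) \<Rightarrow> bool" where
  "holo_at_infinity f \<longleftrightarrow> (\<exists>M y0. \<forall>z. Im z > y0 \<longrightarrow> norm (f z) \<le> M)"

definition automorphic_form :: "nat \<Rightarrow> nat \<Rightarrow> (complex \<Rightarrow> complex) \<Rightarrow> bool" where
  "automorphic_form mu v f \<longleftrightarrow>
     f holomorphic_on upper_half \<and>
     (\<forall>\<gamma>\<in>hecke_group mu. \<forall>z\<in>upper_half. f (moebius \<gamma> z) = jfactor \<gamma> z ^ v * f z) \<and>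
     holo_at_infinity f"

definition Cconst :: "nat \<Rightarrow> complex" where
  "Cconst mu = of_nat (lcm 2 mu) / (of_real pi * \<i>)"

definition is_E2 :: "nat \<Rightarrow> (complex \<Rightarrow> complex) \<Rightarrow> bool" where
  "is_E2 mu E \<longleftrightarrow>
     E holomorphic_on upper_half \<and>
     (\<forall>z\<in>upper_half. E (z + of_real (varpi mu)) = E z) \<and>
     (\<forall>z\<in>upper_half. E (-1 / z) / z^2 = E z + Cconst mu / z)"

text \<open>U = sum_{k=0}^r B_k E_2^k is quasiautomorphic of weight w and depth r.\<close>
definition quasiautomorphic :: "nat \<Rightarrow> nat \<Rightarrow> nat \<Rightarrow> (nat \<Rightarrow> complex \<Rightarrow> complex) \<Rightarrow> bool" where
  "quasiautomorphic mu w r B \<longleftrightarrow>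
     even w \<and> r \<le> w div 2 \<and> (\<forall>k\<le>r. automorphic_form mu (w - 2 * k) (B k))"

definition brk :: "nat \<Rightarrow> nat \<Rightarrow> nat \<Rightarrow> complex" where
  "brk r l m = of_nat (fact (r - l) * fact (m + l)) / of_nat (fact r * fact m)"

definition gfun :: "nat \<Rightarrow> (complex \<Rightarrow> complex) \<Rightarrow> (nat \<Rightarrow> complex \<Rightarrow> complex)
                    \<Rightarrow> nat \<Rightarrow> nat \<Rightarrow> complex \<Rightarrow> complex" where
  "gfun mu E B r l z = Cconst mu ^ l * (\<Sum>m = 0..r - l. brk r l m * B (l + m) z * E z ^ m)"

end

theory Submission
  imports Defs
begin

text \<open>Writing \<open>p = l + m\<close>, one finds \<open>f_n(z) = \<Sum>_{p \<le> r} (p!/r!) B_p(z) Q^(r-p)(E_2(z))\<close> with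
  \<open>Q(X) = X^(r-n) (C + zX)^n\<close>, where \<open>X\<close> is a formal variable standing for \<open>E_2\<close> and
  \<open>Q^(k)\<close> is the \<open>k\<close>-th derivative in \<open>X\<close>. Under \<open>z \<mapsto> -1/z\<close> the coefficient \<open>B_p\<close> picks
  up \<open>z^(w-2p)\<close> and \<open>E_2\<close> becomes the affine expression \<open>Cz + z^2 E_2(z)\<close>. Derivatives of a
  polynomial composed with an affine map only pick up powers of its slope \<open>z^2\<close>, and the
  polynomial \<open>Q\<close> for the point \<open>-1/z\<close>, composed with that affine map, is \<open>(-1)^n z^r\<close> times
  the polynomial belonging to \<open>f_(r-n)\<close> at \<open>z\<close>. All powers of \<open>z\<close> then combine to \<open>z^(w-r)\<close>.\<close>

lemma higher_pderiv_pcompose_linear: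
  fixes p :: "'a::idom poly"
  shows "(pderiv ^^ k) (pcompose p [:a, b:]) = smult (b ^ k) (pcompose ((pderiv ^^ k) p) [:a, b:])"
  by (induction k) (simp_all add: pderiv_smult pderiv_pcompose pderiv_pCons mult.commute)

lemma higher_pderiv_monom_1:
  "(pderiv ^^ k) (monom (1::'a::field_char_0) j) =
     (if k \<le> j then monom (fact j / fact (j - k)) (j - k) else 0)"
proof (induction k)
  case (Suc k)
  show ?case
  proof (cases "Suc k \<le> j")
    case True
    then obtain i where i: "j - k = Suc i" "j - Suc k = i"
      by (metis Suc_diff_Suc Suc_le_lessD)
    have "of_nat (Suc i) * (fact j / fact (Suc i)) = (fact j / fact i :: 'a)"
      by (simp add: fact_Suc del: of_nat_Suc)
    then show ?thesis using True Suc by (simp add: pderiv_monom i del: of_nat_Suc fact_Suc)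
  qed (use Suc in \<open>auto simp: pderiv_monom\<close>)
qed simp

definition f_poly :: "'a::comm_semiring_1 \<Rightarrow> 'a \<Rightarrow> nat \<Rightarrow> nat \<Rightarrow> 'a poly" where
  "f_poly c z r n = monom 1 (r - n) * [:c, z:] ^ n"

definition deriv_expansion :: "nat \<Rightarrow> (nat \<Rightarrow> 'a::field_char_0) \<Rightarrow> 'a poly \<Rightarrow> 'a \<Rightarrow> 'a" where
  "deriv_expansion r b P e = (\<Sum>p\<le>r. fact p / fact r * b p * poly ((pderiv ^^ (r - p)) P) e)"

lemma deriv_expansion_cong:
  "(\<And>p. p \<le> r \<Longrightarrow> b p = b' p) \<Longrightarrow> deriv_expansion r b P e = deriv_expansion r b' P e"
  by (simp add: deriv_expansion_def)

lemma deriv_expansion_smult: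
  "deriv_expansion r b (smult c P) e = c * deriv_expansion r b P e"
  by (simp add: deriv_expansion_def higher_pderiv_smult sum_distrib_left mult_ac)

lemma deriv_expansion_sum:
  "deriv_expansion r b (\<Sum>i\<in>A. P i) e = (\<Sum>i\<in>A. deriv_expansion r b (P i) e)"
  by (simp add: deriv_expansion_def higher_pderiv_sum poly_sum sum_distrib_left sum.swap[of _ A])

lemma deriv_expansion_pcompose_linear:
  "deriv_expansion r (\<lambda>p. c * d ^ (r - p) * b p) P (a + d * e) =
     c * deriv_expansion r b (pcompose P [:a, d:]) e"
  by (simp add: deriv_expansion_def higher_pderiv_pcompose_linear poly_pcompose sum_distrib_left mult_ac)

lemma f_poly_expand:
  fixes c z :: "'a::field_char_0"
  assumes "n \<le> r"
  shows "f_poly c z r n = (\<Sum>l\<le>n. smult (of_nat (n choose l) * c ^ l * z ^ (n - l)) (monom 1 (r - l)))"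
proof (rule poly_eq_poly_eq_iff[THEN iffD1], rule ext)
  fix x
  have "poly (f_poly c z r n) x =
      (\<Sum>l\<le>n. x ^ (r - n) * (of_nat (n choose l) * c ^ l * (x * z) ^ (n - l)))"
    by (simp add: f_poly_def poly_monom binomial_ring sum_distrib_left)
  also have "\<dots> = (\<Sum>l\<le>n. of_nat (n choose l) * c ^ l * z ^ (n - l) * x ^ (r - l))"
  proof (rule sum.cong)
    fix l assume "l \<in> {..n}"
    then have "r - l = (r - n) + (n - l)" using assms by simp
    then show "x ^ (r - n) * (of_nat (n choose l) * c ^ l * (x * z) ^ (n - l)) =
      of_nat (n choose l) * c ^ l * z ^ (n - l) * x ^ (r - l)"
      by (simp add: power_add power_mult_distrib mult_ac)
  qed simp
  finally show "poly (f_poly c z r n) x =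
      poly (\<Sum>l\<le>n. smult (of_nat (n choose l) * c ^ l * z ^ (n - l)) (monom 1 (r - l))) x"
    by (simp add: poly_sum poly_monom)
qed

lemma f_poly_inversion:
  fixes c z :: "'a::field_char_0"
  assumes "z \<noteq> 0" "n \<le> r"
  shows "pcompose (f_poly c (-1 / z) r n) [:c * z, z ^ 2:] =
    smult ((-1) ^ n * z ^ r) (f_poly c z r (r - n))"
proof (rule poly_eq_poly_eq_iff[THEN iffD1], rule ext)
  fix x
  have lin: "c * z + x * z ^ 2 = z * (c + x * z)" "c - (c * z + x * z ^ 2) / z = (-1) * (x * z)"
    using assms(1) by (simp_all add: power2_eq_square field_simps)
  have "poly (pcompose (f_poly c (-1 / z) r n) [:c * z, z ^ 2:]) x =
      (z * (c + x * z)) ^ (r - n) * ((-1) * (x * z)) ^ n"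
    using assms(1) by (simp add: f_poly_def poly_pcompose poly_monom lin)
  also have "\<dots> = (-1) ^ n * (z ^ (r - n) * z ^ n) * (x ^ n * (c + x * z) ^ (r - n))"
    unfolding power_mult_distrib by (simp only: mult_ac)
  also have "z ^ (r - n) * z ^ n = z ^ r"
    using assms(2) by (simp flip: power_add)
  also have "(-1) ^ n * z ^ r * (x ^ n * (c + x * z) ^ (r - n)) =
      poly (smult ((-1) ^ n * z ^ r) (f_poly c z r (r - n))) x"
    using assms(2) by (simp add: f_poly_def poly_monom)
  finally show "poly (pcompose (f_poly c (-1 / z) r n) [:c * z, z ^ 2:]) x =
      poly (smult ((-1) ^ n * z ^ r) (f_poly c z r (r - n))) x" .
qed

lemma deriv_expansion_monom:
  assumes "l \<le> r"
  shows "deriv_expansion r b (monom 1 (r - l)) e = (\<Sum>m = 0..r - l. brk r l m * b (l + m) * e ^ m)"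
proof -
  have "deriv_expansion r b (monom 1 (r - l)) e =
      (\<Sum>p = l..r. fact p / fact r * b p * (fact (r - l) / fact (p - l) * e ^ (p - l)))"
  proof -
    have "r - p \<le> r - l \<longleftrightarrow> l \<le> p" "r - l - (r - p) = p - l" if "p \<le> r" for p
      using that assms by auto
    then show ?thesis
      unfolding deriv_expansion_def higher_pderiv_monom_1
      by (intro sum.mono_neutral_cong_right) (auto simp: poly_monom)
  qed
  also have "\<dots> = (\<Sum>m = 0..r - l. fact (m + l) / fact r * b (m + l) * (fact (r - l) / fact m * e ^ m))"
    using sum.shift_bounds_cl_nat_ivl[of
        "\<lambda>p. fact p / fact r * b p * (fact (r - l) / fact (p - l) * e ^ (p - l))" 0 l "r - l"] assms
    by simp
  also have "\<dots> = (\<Sum>m = 0..r - l. brk r l m * b (l + m) * e ^ m)"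
    by (simp add: brk_def add.commute mult_ac)
  finally show ?thesis .
qed

lemma f_sum_eq_deriv_expansion:
  assumes "n \<le> r"
  shows "(\<Sum>l = 0..n. of_nat (n choose l) * gfun mu E B r l y * y ^ (n - l)) =
    deriv_expansion r (\<lambda>p. B p y) (f_poly (Cconst mu) y r n) (E y)"
proof -
  have "deriv_expansion r (\<lambda>p. B p y) (f_poly (Cconst mu) y r n) (E y) =
      (\<Sum>l\<le>n. of_nat (n choose l) * Cconst mu ^ l * y ^ (n - l) *
        deriv_expansion r (\<lambda>p. B p y) (monom 1 (r - l)) (E y))"
    using assms by (simp add: f_poly_expand deriv_expansion_sum deriv_expansion_smult)
  also have "\<dots> = (\<Sum>l\<le>n. of_nat (n choose l) * gfun mu E B r l y * y ^ (n - l))"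
    using assms by (intro sum.cong) (simp_all add: gfun_def deriv_expansion_monom mult_ac)
  finally show ?thesis
    by (simp add: atLeast0AtMost)
qed

lemma S_mat_in_hecke_group: "S_mat \<in> hecke_group mu"
  using hecke_group.S[OF hecke_group.one, of mu] by (simp add: S_mat_def)

lemma automorphic_form_inversion:
  assumes "automorphic_form mu v f" "z \<in> upper_half"
  shows "f (-1 / z) = z ^ v * f z"
  using assms S_mat_in_hecke_group[of mu] unfolding automorphic_form_def by (auto simp: S_mat_def)

lemma quasiautomorphic_coeff_inversion:
  assumes "quasiautomorphic mu w r B" "p \<le> r" "z \<in> upper_half"
  shows "B p (-1 / z) = z ^ (w - 2 * r) * (z ^ 2) ^ (r - p) * B p z"
proof -
  have "automorphic_form mu (w - 2 * p) (B p)" "2 * r \<le> w"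
    using assms(1,2) by (auto simp: quasiautomorphic_def)
  have "B p (-1 / z) = z ^ (w - 2 * p) * B p z"
    by (rule automorphic_form_inversion) fact+
  also have "w - 2 * p = (w - 2 * r) + 2 * (r - p)"
    using \<open>2 * r \<le> w\<close> assms(2) by simp
  finally show ?thesis
    by (simp add: power_add power_mult)
qed

lemma is_E2_inversion:
  assumes "is_E2 mu E" "z \<in> upper_half"
  shows "E (-1 / z) = Cconst mu * z + z ^ 2 * E z"
proof -
  have "z \<noteq> 0"
    using assms(2) by (auto simp: upper_half_def)
  moreover have "E (-1 / z) / z ^ 2 = E z + Cconst mu / z"
    using assms by (auto simp: is_E2_def)
  ultimately show ?thesis
    by (simp add: field_simps power2_eq_square)
qed

theorem mainTheorem8:
  fixes mu w r n :: nat and B :: "nat \<Rightarrow> complex \<Rightarrow> complex"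
    and E2 :: "complex \<Rightarrow> complex" and z :: complex
  assumes "mu \<ge> 3"
    and "is_E2 mu E2"
    and "quasiautomorphic mu w r B"
    and "n \<le> r"
    and "z \<in> upper_half"
  shows "(1 / z ^ (w - r)) *
           (\<Sum>l = 0..n. of_nat (n choose l) * gfun mu E2 B r l (-1 / z) * (-1 / z) ^ (n - l))
         = (-1) ^ n * (\<Sum>m = 0..r - n. of_nat ((r - n) choose m) * gfun mu E2 B r m z * z ^ (r - n - m))"
proof -
  let ?C = "Cconst mu"
  have "z \<noteq> 0"
    using assms(5) by (auto simp: upper_half_def)
  have "2 * r \<le> w"
    using assms(3) by (auto simp: quasiautomorphic_def)
  have "(\<Sum>l = 0..n. of_nat (n choose l) * gfun mu E2 B r l (-1 / z) * (-1 / z) ^ (n - l)) =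
      deriv_expansion r (\<lambda>p. B p (-1 / z)) (f_poly ?C (-1 / z) r n) (E2 (-1 / z))"
    using assms(4) by (rule f_sum_eq_deriv_expansion)
  also have "\<dots> = deriv_expansion r (\<lambda>p. z ^ (w - 2 * r) * (z ^ 2) ^ (r - p) * B p z)
      (f_poly ?C (-1 / z) r n) (?C * z + z ^ 2 * E2 z)"
    unfolding is_E2_inversion[OF assms(2,5)]
    by (rule deriv_expansion_cong) (rule quasiautomorphic_coeff_inversion[OF assms(3) _ assms(5)])
  also have "\<dots> = z ^ (w - 2 * r) *
      deriv_expansion r (\<lambda>p. B p z) (pcompose (f_poly ?C (-1 / z) r n) [:?C * z, z ^ 2:]) (E2 z)"
    by (rule deriv_expansion_pcompose_linear)
  also have "\<dots> = z ^ (w - 2 * r) * z ^ r * (-1) ^ n *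
      deriv_expansion r (\<lambda>p. B p z) (f_poly ?C z r (r - n)) (E2 z)"
    unfolding f_poly_inversion[OF \<open>z \<noteq> 0\<close> assms(4)] deriv_expansion_smult by (simp only: mult_ac)
  also have "z ^ (w - 2 * r) * z ^ r = z ^ (w - r)"
    using \<open>2 * r \<le> w\<close> by (simp flip: power_add)
  finally show ?thesis
    using \<open>z \<noteq> 0\<close> f_sum_eq_deriv_expansion[of "r - n" r mu E2 B z] assms(4) by simp
qed

end
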